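(* Let $u$ be a smooth solution of the equivariant Skyrme equation in $\Omega$ with $u(t,0)=0$, and let $(t_n)_n\subset(0,T_0]$ be a sequence with $t_n\to0$ and \[ \lim_{n\to\infty}\int_0^{t_n}\frac{\sin^2u(t_n,r)}{r^2}\,u_r(t_n,r)^2\,r\,dr=0. \] Then there are constants $C_n$ with $C_n\to0$ as $n\to\infty$ such that $|u(t_n,r)|\le C_n\,r^{1/2}$ for all $0\le r\le t_n$ (for all $n$ sufficiently large).
   Context: Fix $\alpha>0$, $T_0>0$. The equivariant Skyrme equation is \[ \Big(1+\tfrac{\alpha^2\sin^2u}{r^2}\Big)(u_{tt}-u_{rr}) - \Big(1-\tfrac{\alpha^2\sin^2u}{r^2}\Big)\tfrac{u_r}{r} + \tfrac{\sin 2u}{2r^2}\big[\alpha^2(u_t^2-u_r^2)+1\big]=0. \] $\Omega=\{(t,r):0<t\le T_0,\ 0\le r\le t\}$; a smooth solution in $\Omega$ is a smooth function on $\Omega$ satisfying the equation for $r>0$. *)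

theory Defs
  imports "HOL-Analysis.Analysis"
begin

definition Omega :: "real \<Rightarrow> (real \<times> real) set" where
  "Omega T0 = {(t, r). 0 < t \<and> t \<le> T0 \<and> 0 \<le> r \<and> r \<le> t}"

text \<open>C-infinity on an open set U of R^2: f lies in a family of functions, each
  of which is (Frechet) differentiable on U with both partial derivatives again in
  the family.\<close>
definition smooth_on :: "(real \<times> real) set \<Rightarrow> (real \<times> real \<Rightarrow> real) \<Rightarrow> bool" where
  "smooth_on U f \<longleftrightarrow> (\<exists>S. f \<in> S \<and>
     (\<forall>g\<in>S. \<exists>g1\<in>S. \<exists>g2\<in>S. \<forall>x\<in>U.
        (g has_derivative (\<lambda>(h, k). g1 x * h + g2 x * k)) (at x)))"

definition skyrme_lhs :: "real \<Rightarrow> (real \<Rightarrow> real \<Rightarrow> real) \<Rightarrow> real \<Rightarrow> real \<Rightarrow> real" where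
  "skyrme_lhs \<alpha> v t r =
    (let u = v t r;
         ut = deriv (\<lambda>s. v s r) t;
         ur = deriv (\<lambda>x. v t x) r;
         utt = deriv (\<lambda>s. deriv (\<lambda>s'. v s' r) s) t;
         urr = deriv (\<lambda>x. deriv (\<lambda>x'. v t x') x) r
     in (1 + \<alpha>\<^sup>2 * (sin u)\<^sup>2 / r\<^sup>2) * (utt - urr)
        - (1 - \<alpha>\<^sup>2 * (sin u)\<^sup>2 / r\<^sup>2) * ur / r
        + sin (2 * u) / (2 * r\<^sup>2) * (\<alpha>\<^sup>2 * (ut\<^sup>2 - ur\<^sup>2) + 1))"

definition smooth_skyrme_solution :: "real \<Rightarrow> real \<Rightarrow> (real \<Rightarrow> real \<Rightarrow> real) \<Rightarrow> bool" where
  "smooth_skyrme_solution \<alpha> T0 u \<longleftrightarrow>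
    (\<exists>U v. open U \<and> Omega T0 \<subseteq> U \<and> smooth_on U (\<lambda>(t, r). v t r) \<and>
       (\<forall>t r. (t, r) \<in> Omega T0 \<longrightarrow> v t r = u t r) \<and>
       (\<forall>t r. (t, r) \<in> Omega T0 \<longrightarrow> 0 < r \<longrightarrow> skyrme_lhs \<alpha> v t r = 0))"

end

theory Submission
  imports Defs
begin

(* The theorem is a one-dimensional Hardy-type estimate and uses only the regularity of
   the solution, not the equation itself.  Fix a time slice T = t_n and write phi = u(T,.),
   p = phi_r.  Since (1 - cos phi)' = sin phi * p, the weighted AM-GM inequality
     sin phi * p  <=  (l/2) * (sin phi / s)^2 p^2 s  +  s/(2l)
   integrated over [0,r] gives  1 - cos phi(r) <= (l/2) E + r^2/(2l), where E is the
   angular energy of the slice; choosing l = r/delta with E <= delta^2 yields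
     1 - cos phi(r) <= delta * r.
   If T * delta < 1, phi can therefore never reach +-pi/2 on [0,T] (intermediate value
   theorem), so |phi| <= 2 and the elementary bound x^2 <= 3 (1 - cos x) gives
     |phi(r)| <= sqrt(3 delta) * sqrt r. *)

lemma cos_ge_one_minus_half_sq:
  fixes x :: real
  assumes "0 \<le> x"
  shows "1 - x^2/2 \<le> cos x"
proof -
  let ?f = "\<lambda>x::real. cos x - 1 + x^2/2"
  have "?f 0 \<le> ?f x"
  proof (rule DERIV_nonneg_imp_nondecreasing[OF assms])
    fix y :: real assume "0 \<le> y" "y \<le> x"
    have "DERIV ?f y :> (y - sin y)" by (auto intro!: derivative_eq_intros)
    moreover have "y - sin y \<ge> 0" using sin_x_le_x[OF \<open>0 \<le> y\<close>] by simp
    ultimately show "\<exists>d. DERIV ?f y :> d \<and> 0 \<le> d" by blast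
  qed
  then show ?thesis by simp
qed

lemma sin_ge_cubic_taylor:
  fixes x :: real
  assumes "0 \<le> x"
  shows "x - x^3/6 \<le> sin x"
proof -
  let ?f = "\<lambda>x::real. sin x - x + x^3/6"
  have "?f 0 \<le> ?f x"
  proof (rule DERIV_nonneg_imp_nondecreasing[OF assms])
    fix y :: real assume "0 \<le> y" "y \<le> x"
    have "DERIV ?f y :> (cos y - 1 + y^2/2)"
      by (auto intro!: derivative_eq_intros simp: power2_eq_square)
    moreover have "cos y - 1 + y^2/2 \<ge> 0" using cos_ge_one_minus_half_sq[OF \<open>0 \<le> y\<close>] by simp
    ultimately show "\<exists>d. DERIV ?f y :> d \<and> 0 \<le> d" by blast
  qed
  then show ?thesis by simp
qed

lemma one_minus_cos_ge_quartic_taylor: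
  fixes x :: real
  assumes "0 \<le> x"
  shows "x^2/2 - x^4/24 \<le> 1 - cos x"
proof -
  let ?f = "\<lambda>x::real. 1 - cos x - x^2/2 + x^4/24"
  have "?f 0 \<le> ?f x"
  proof (rule DERIV_nonneg_imp_nondecreasing[OF assms])
    fix y :: real assume "0 \<le> y" "y \<le> x"
    have "DERIV ?f y :> (sin y - y + y^3/6)" by (auto intro!: derivative_eq_intros)
    moreover have "sin y - y + y^3/6 \<ge> 0" using sin_ge_cubic_taylor[OF \<open>0 \<le> y\<close>] by simp
    ultimately show "\<exists>d. DERIV ?f y :> d \<and> 0 \<le> d" by blast
  qed
  then show ?thesis by simp
qed

text \<open>Near the origin, \<open>1 - cos\<close> controls the square: this converts the energy estimate
  for \<open>1 - cos \<phi>\<close> into a bound on \<open>\<phi>\<close> itself.\<close>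

lemma sq_le_three_one_minus_cos:
  fixes x :: real
  assumes "\<bar>x\<bar> \<le> 2"
  shows "x^2 \<le> 3 * (1 - cos x)"
proof -
  have "cos \<bar>x\<bar> = cos x" by (simp add: abs_if)
  then have taylor: "x^2/2 - x^4/24 \<le> 1 - cos x"
    using one_minus_cos_ge_quartic_taylor[of "\<bar>x\<bar>"] by simp
  have "x^2 \<le> 4" using power_mono[OF assms, of 2] by simp
  then have "x^2 * x^2 \<le> 4 * x^2" by (rule mult_right_mono) simp
  then have "x^4 \<le> 4 * x^2" by (simp add: power4_eq_xxxx power2_eq_square)
  moreover have "\<And>a b c :: real. a/2 - b/24 \<le> c \<Longrightarrow> b \<le> 4 * a \<Longrightarrow> a \<le> 3 * c"
    by linarith
  ultimately show ?thesis using taylor by blast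
qed

lemma le_weighted_amgm:
  fixes a s l :: real
  assumes "0 < s" "0 < l"
  shows "a \<le> l / 2 * (a^2 / s) + s / (2 * l)"
proof -
  have "l / 2 * (a^2 / s) + s / (2 * l) - a = (l * a - s)^2 / (2 * l * s)"
    using assms by (simp add: field_simps power2_eq_square)
  moreover have "(l * a - s)^2 / (2 * l * s) \<ge> 0" using assms by simp
  ultimately show ?thesis by linarith
qed

definition energy_density :: "(real \<Rightarrow> real) \<Rightarrow> (real \<Rightarrow> real) \<Rightarrow> real \<Rightarrow> real" where
  "energy_density \<phi> p s = (sin (\<phi> s))^2 / s^2 * (p s)^2 * s"

text \<open>For a \<open>C\<^sup>1\<close> profile vanishing at the origin the density is continuous up to \<open>s = 0\<close>,
  because \<open>sin (\<phi> s) / s \<rightarrow> \<phi>'(0)\<close>; hence it is integrable on every \<open>[0,r]\<close>.\<close>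

lemma energy_density_continuous:
  fixes \<phi> p :: "real \<Rightarrow> real" and T :: real
  assumes deriv: "\<And>s. s \<in> {0..T} \<Longrightarrow> (\<phi> has_real_derivative p s) (at s)"
    and p_cont: "continuous_on {0..T} p"
    and zero: "\<phi> 0 = 0"
  shows "continuous_on {0..T} (energy_density \<phi> p)"
proof (cases "0 \<le> T")
  case False
  then show ?thesis by simp
next
  case True
  define q where "q s = (if s = 0 then p 0 else sin (\<phi> s) / s)" for s
  have "((\<lambda>s. sin (\<phi> s)) has_real_derivative cos (\<phi> 0) * p 0) (at 0)"
    using deriv[of 0] True by (auto intro!: derivative_eq_intros)
  then have lim: "((\<lambda>y. sin (\<phi> y) / y) \<longlongrightarrow> p 0) (at 0)"
    using zero by (simp add: has_field_derivative_iff)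
  have "eventually (\<lambda>y. sin (\<phi> y) / y = q y) (at 0)"
    by (simp add: eventually_at_filter q_def)
  then have "(q \<longlongrightarrow> p 0) (at 0)" using lim by (simp add: tendsto_cong)
  then have q_cont_0: "isCont q 0" by (simp add: isCont_def q_def)
  have "isCont q x" if x: "x \<in> {0..T}" for x
  proof (cases "x = 0")
    case True
    then show ?thesis using q_cont_0 by simp
  next
    case False
    have quotient: "isCont (\<lambda>y. sin (\<phi> y) / y) x"
      using DERIV_isCont[OF deriv[OF x]] False by (auto intro!: continuous_intros)
    have "eventually (\<lambda>y. q y = sin (\<phi> y) / y) (nhds x)"
      using t1_space_nhds[OF False] by eventually_elim (simp add: q_def)
    from isCont_cong[OF this] quotient show ?thesis by simp
  qed
  then have "continuous_on {0..T} (\<lambda>s. (q s)^2 * (p s)^2 * s)"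
    by (intro continuous_intros p_cont continuous_at_imp_continuous_on) auto
  moreover have "(q s)^2 * (p s)^2 * s = energy_density \<phi> p s" for s
    by (cases "s = 0") (simp_all add: q_def energy_density_def power_divide)
  ultimately show ?thesis by simp
qed

text \<open>Integrated AM-GM: since \<open>(1 - cos \<phi>)' = sin \<phi> \<cdot> p\<close>, for every weight \<open>l > 0\<close> the
  quantity \<open>1 - cos \<phi>(r)\<close> is bounded by the energy on \<open>[0,r]\<close> plus \<open>r\<^sup>2/(2l)\<close>.\<close>

lemma one_minus_cos_le_energy:
  fixes \<phi> p :: "real \<Rightarrow> real" and r l :: real
  assumes r: "0 \<le> r" and l: "0 < l"
    and deriv: "\<And>s. s \<in> {0..r} \<Longrightarrow> (\<phi> has_real_derivative p s) (at s)"
    and p_cont: "continuous_on {0..r} p"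
    and zero: "\<phi> 0 = 0"
  shows "1 - cos (\<phi> r) \<le> l / 2 * integral {0..r} (energy_density \<phi> p) + r^2 / (2 * l)"
proof -
  let ?h = "energy_density \<phi> p"
  have "?h integrable_on {0..r}"
    by (intro integrable_continuous_real energy_density_continuous deriv p_cont zero)
  then have majorant: "((\<lambda>s. l / 2 * ?h s + r / (2 * l)) has_integral
      (l / 2 * integral {0..r} ?h + measure lborel {0..r} *\<^sub>R (r / (2 * l)))) {0..r}"
    by (intro has_integral_add has_integral_mult_right has_integral_const_real integrable_integral)
  have ftc: "((\<lambda>s. sin (\<phi> s) * p s) has_integral (1 - cos (\<phi> r))) {0..r}"
  proof -
    have "((\<lambda>s. 1 - cos (\<phi> s)) has_real_derivative sin (\<phi> x) * p x) (at x)"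
      if "x \<in> {0..r}" for x
      using deriv[OF that] by (auto intro!: derivative_eq_intros)
    then show ?thesis
      using fundamental_theorem_of_calculus[OF r, of "\<lambda>s. 1 - cos (\<phi> s)"] zero
      by (simp add: has_real_derivative_iff_has_vector_derivative has_vector_derivative_at_within)
  qed
  have pointwise: "sin (\<phi> s) * p s \<le> l / 2 * ?h s + r / (2 * l)" if s: "s \<in> {0..r}" for s
  proof (cases "s = 0")
    case True
    then show ?thesis using zero l r by (simp add: energy_density_def)
  next
    case False
    then have "0 < s" using s by auto
    have "?h s = (sin (\<phi> s) * p s)^2 / s"
      using \<open>0 < s\<close> by (simp add: energy_density_def power2_eq_square field_simps)
    then have "sin (\<phi> s) * p s \<le> l / 2 * ?h s + s / (2 * l)"
      using le_weighted_amgm[OF \<open>0 < s\<close> l] by simp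
    moreover have "s / (2 * l) \<le> r / (2 * l)" using s l by (simp add: divide_right_mono)
    ultimately show ?thesis by simp
  qed
  show ?thesis
    using has_integral_le[OF ftc majorant pointwise] r by (simp add: power2_eq_square)
qed

text \<open>Choosing the weight \<open>l = r/\<delta>\<close>: energy at most \<open>\<delta>\<^sup>2\<close> on \<open>[0,T]\<close> gives
  \<open>1 - cos \<phi>(r) \<le> \<delta> r\<close> throughout \<open>[0,T]\<close>.\<close>

lemma one_minus_cos_le_linear:
  fixes \<phi> p :: "real \<Rightarrow> real" and T \<delta> r :: real
  assumes \<delta>: "0 < \<delta>" and r: "r \<in> {0..T}"
    and deriv: "\<And>s. s \<in> {0..T} \<Longrightarrow> (\<phi> has_real_derivative p s) (at s)"
    and p_cont: "continuous_on {0..T} p"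
    and zero: "\<phi> 0 = 0"
    and energy: "integral {0..T} (energy_density \<phi> p) \<le> \<delta>^2"
  shows "1 - cos (\<phi> r) \<le> r * \<delta>"
proof (cases "r = 0")
  case True
  then show ?thesis using zero by simp
next
  case False
  with r have "0 < r" by simp
  have sub: "{0..r} \<subseteq> {0..T}" using r by auto
  have "energy_density \<phi> p integrable_on {0..T}"
    by (intro integrable_continuous_real energy_density_continuous deriv p_cont zero)
  then have "integral {0..r} (energy_density \<phi> p) \<le> integral {0..T} (energy_density \<phi> p)"
    using sub by (intro integral_subset_le integrable_on_subinterval)
      (auto simp: energy_density_def)
  then have energy_r: "integral {0..r} (energy_density \<phi> p) \<le> \<delta>^2" using energy by simp
  have "0 < r / \<delta>" using \<open>0 < r\<close> \<delta> by simp
  have "1 - cos (\<phi> r) \<le> (r / \<delta>) / 2 * integral {0..r} (energy_density \<phi> p)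
      + r^2 / (2 * (r / \<delta>))"
    using sub by (intro one_minus_cos_le_energy continuous_on_subset[OF p_cont] deriv zero)
      (use \<open>0 < r\<close> \<open>0 < r / \<delta>\<close> in auto)
  also have "\<dots> \<le> (r / \<delta>) / 2 * \<delta>^2 + r^2 / (2 * (r / \<delta>))"
    using mult_left_mono[OF energy_r, of "r / \<delta> / 2"] \<open>0 < r / \<delta>\<close> by simp
  also have "\<dots> = r * \<delta>"
    using \<delta> \<open>0 < r\<close> by (simp add: field_simps power2_eq_square)
  finally show ?thesis .
qed

lemma abs_less_pi_half_if_cos_nonzero:
  fixes \<phi> :: "real \<Rightarrow> real" and T r :: real
  assumes cont: "\<And>x. x \<in> {0..T} \<Longrightarrow> isCont \<phi> x"
    and zero: "\<phi> 0 = 0"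
    and cos_nz: "\<And>x. x \<in> {0..T} \<Longrightarrow> cos (\<phi> x) \<noteq> 0"
    and r: "r \<in> {0..T}"
  shows "\<bar>\<phi> r\<bar> < pi / 2"
proof (rule ccontr)
  have cont_r: "\<forall>x. 0 \<le> x \<and> x \<le> r \<longrightarrow> isCont \<phi> x" using cont r by auto
  assume "\<not> \<bar>\<phi> r\<bar> < pi / 2"
  then obtain x where x: "0 \<le> x" "x \<le> r" and "\<phi> x = pi/2 \<or> \<phi> x = - (pi/2)"
    using IVT[of \<phi> 0 "pi/2" r] IVT2[of \<phi> r "- (pi/2)" 0] zero r cont_r
    by (cases "0 \<le> \<phi> r") auto
  then have "cos (\<phi> x) = 0" by (metis cos_minus cos_pi_half)
  then show False using cos_nz[of x] x r by simp
qed

lemma profile_sqrt_bound: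
  fixes \<phi> p :: "real \<Rightarrow> real" and T \<delta> r :: real
  assumes \<delta>: "0 < \<delta>" and small: "T * \<delta> < 1" and r: "r \<in> {0..T}"
    and deriv: "\<And>s. s \<in> {0..T} \<Longrightarrow> (\<phi> has_real_derivative p s) (at s)"
    and p_cont: "continuous_on {0..T} p"
    and zero: "\<phi> 0 = 0"
    and energy: "integral {0..T} (energy_density \<phi> p) \<le> \<delta>^2"
  shows "\<bar>\<phi> r\<bar> \<le> sqrt (3 * \<delta>) * sqrt r"
proof -
  have linear: "1 - cos (\<phi> x) \<le> x * \<delta>" if "x \<in> {0..T}" for x
    using one_minus_cos_le_linear[OF \<delta> that deriv p_cont zero energy] .
  have "cos (\<phi> x) \<noteq> 0" if x: "x \<in> {0..T}" for x
  proof
    assume "cos (\<phi> x) = 0"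
    then have "1 \<le> x * \<delta>" using linear[OF x] by simp
    also have "\<dots> \<le> T * \<delta>" using x \<delta> by (auto intro: mult_right_mono)
    finally show False using small by simp
  qed
  then have "\<bar>\<phi> r\<bar> < pi / 2"
    using abs_less_pi_half_if_cos_nonzero[OF DERIV_isCont[OF deriv] zero _ r] by blast
  then have "\<bar>\<phi> r\<bar> \<le> 2" using pi_half_less_two by linarith
  then have "(\<phi> r)^2 \<le> 3 * (1 - cos (\<phi> r))" by (rule sq_le_three_one_minus_cos)
  also have "\<dots> \<le> 3 * (r * \<delta>)" using linear[OF r] by simp
  finally have "(\<phi> r)^2 \<le> 3 * \<delta> * r" by (simp add: mult_ac)
  then have "sqrt ((\<phi> r)^2) \<le> sqrt (3 * \<delta> * r)" by (rule real_sqrt_le_mono)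
  then show ?thesis by (simp add: real_sqrt_mult)
qed

lemma smooth_on_radial_derivative:
  assumes "smooth_on U (\<lambda>(t, r). v t r)"
  obtains g where "continuous_on U g"
    and "\<And>t s. (t, s) \<in> U \<Longrightarrow> ((\<lambda>s. v t s) has_real_derivative g (t, s)) (at s)"
proof -
  obtain S where "(\<lambda>(t, r). v t r) \<in> S"
    and closed: "\<forall>f\<in>S. \<exists>f1\<in>S. \<exists>f2\<in>S. \<forall>x\<in>U.
        (f has_derivative (\<lambda>(h, k). f1 x * h + f2 x * k)) (at x)"
    using assms unfolding smooth_on_def by blast
  then obtain g1 g where "g \<in> S" and der: "\<forall>x\<in>U.
        ((\<lambda>(t, r). v t r) has_derivative (\<lambda>(h, k). g1 x * h + g x * k)) (at x)"
    by blast
  then obtain g21 g22 where "\<forall>x\<in>U. (g has_derivative (\<lambda>(h, k). g21 x * h + g22 x * k)) (at x)"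
    using closed by blast
  then have "continuous_on U g"
    by (intro continuous_at_imp_continuous_on) (auto intro: has_derivative_continuous)
  moreover have "((\<lambda>s. v t s) has_real_derivative g (t, s)) (at s)" if "(t, s) \<in> U" for t s
  proof -
    have "((\<lambda>s. (t, s)) has_derivative (\<lambda>k. (0, k))) (at s)"
      by (auto intro!: derivative_eq_intros)
    from has_derivative_compose[OF this] der that
    have "((\<lambda>s. (\<lambda>(t, r). v t r) (t, s)) has_derivative
             (\<lambda>k. (\<lambda>(h, k). g1 (t, s) * h + g (t, s) * k) (0, k))) (at s)"
      by blast
    then show ?thesis by (simp add: has_field_derivative_def)
  qed
  ultimately show ?thesis using that by blast
qed

text \<open>The energy integral in the hypothesis of the main theorem, written with \<open>deriv\<close>, equals
  the energy of any \<open>C\<^sup>1\<close> profile that agrees with the slice on \<open>[0,T]\<close>: the derivatives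
  agree on the open interval, and the endpoints are negligible.\<close>

lemma energy_integral_eq:
  fixes \<phi> p w :: "real \<Rightarrow> real" and T :: real
  assumes deriv: "\<And>s. s \<in> {0..T} \<Longrightarrow> (\<phi> has_real_derivative p s) (at s)"
    and agree: "\<And>s. s \<in> {0..T} \<Longrightarrow> \<phi> s = w s"
  shows "integral {0..T} (\<lambda>r. (sin (w r))\<^sup>2 / r\<^sup>2 * (deriv w r)\<^sup>2 * r)
       = integral {0..T} (energy_density \<phi> p)"
proof (rule integral_spike[of "{0, T}"])
  fix x assume x: "x \<in> {0..T} - {0, T}"
  then have "(w has_real_derivative p x) (at x)"
    using agree by (intro has_field_derivative_transform_within_open[OF deriv, of x "{0<..<T}"])
      auto
  then show "energy_density \<phi> p x = (sin (w x))\<^sup>2 / x\<^sup>2 * (deriv w x)\<^sup>2 * x"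
    using agree[of x] x by (simp add: DERIV_imp_deriv energy_density_def)
qed simp

lemma smooth_solution_slice_bound:
  fixes u :: "real \<Rightarrow> real \<Rightarrow> real" and \<alpha> T0 T \<delta> r :: real
  assumes sol: "smooth_skyrme_solution \<alpha> T0 u"
    and T: "0 < T" "T \<le> T0" and axis: "u T 0 = 0"
    and \<delta>: "0 < \<delta>" and small: "T * \<delta> < 1" and r: "r \<in> {0..T}"
    and energy: "integral {0..T} (\<lambda>r. (sin (u T r))\<^sup>2 / r\<^sup>2 * (deriv (u T) r)\<^sup>2 * r) \<le> \<delta>^2"
  shows "\<bar>u T r\<bar> \<le> sqrt (3 * \<delta>) * sqrt r"
proof -
  obtain U v where "Omega T0 \<subseteq> U" and "smooth_on U (\<lambda>(t, r). v t r)"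
    and agree: "\<And>t r. (t, r) \<in> Omega T0 \<Longrightarrow> v t r = u t r"
    using sol unfolding smooth_skyrme_solution_def by blast
  moreover have slice: "(T, s) \<in> Omega T0" if "s \<in> {0..T}" for s
    using that T by (auto simp: Omega_def)
  ultimately obtain g where "continuous_on U g"
    and deriv: "\<And>s. s \<in> {0..T} \<Longrightarrow> ((\<lambda>s. v T s) has_real_derivative g (T, s)) (at s)"
    by (metis smooth_on_radial_derivative subsetD)
  have p_cont: "continuous_on {0..T} (\<lambda>s. g (T, s))"
    by (rule continuous_on_compose2[OF \<open>continuous_on U g\<close>])
      (use slice \<open>Omega T0 \<subseteq> U\<close> in \<open>auto intro!: continuous_intros\<close>)
  have "\<bar>v T r\<bar> \<le> sqrt (3 * \<delta>) * sqrt r"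
  proof (rule profile_sqrt_bound[OF \<delta> small r deriv p_cont])
    show "v T 0 = 0" using agree[OF slice, of 0] axis T by simp
    show "integral {0..T} (energy_density (\<lambda>s. v T s) (\<lambda>s. g (T, s))) \<le> \<delta>^2"
      using energy energy_integral_eq[OF deriv, where w = "u T"] agree[OF slice] by simp
  qed
  then show ?thesis using agree[OF slice[OF r]] by simp
qed

theorem mainTheorem6:
  fixes \<alpha> T0 :: real and u :: "real \<Rightarrow> real \<Rightarrow> real" and t :: "nat \<Rightarrow> real"
  assumes "\<alpha> > 0" and "T0 > 0"
    and "smooth_skyrme_solution \<alpha> T0 u"
    and "\<forall>s. 0 < s \<and> s \<le> T0 \<longrightarrow> u s 0 = 0"
    and "\<forall>n. 0 < t n \<and> t n \<le> T0"
    and "t \<longlonglongrightarrow> 0"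
    and "(\<lambda>n. integral {0..t n}
            (\<lambda>r. (sin (u (t n) r))\<^sup>2 / r\<^sup>2 * (deriv (u (t n)) r)\<^sup>2 * r)) \<longlonglongrightarrow> 0"
  shows "\<exists>C :: nat \<Rightarrow> real. C \<longlonglongrightarrow> 0 \<and>
           (\<forall>\<^sub>F n in sequentially. \<forall>r. 0 \<le> r \<and> r \<le> t n \<longrightarrow> \<bar>u (t n) r\<bar> \<le> C n * sqrt r)"
proof -
  define E where "E n = integral {0..t n}
            (\<lambda>r. (sin (u (t n) r))\<^sup>2 / r\<^sup>2 * (deriv (u (t n)) r)\<^sup>2 * r)" for n
  \<comment> \<open>\<open>\<delta>\<^sub>n\<close> is a strictly positive majorant of \<open>\<surd>E\<^sub>n\<close> that still tends to zero.\<close>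
  define \<delta> where "\<delta> n = sqrt \<bar>E n\<bar> + inverse (real (Suc n))" for n
  have \<delta>_pos: "0 < \<delta> n" for n
    unfolding \<delta>_def by (intro add_nonneg_pos) auto
  have energy: "E n \<le> (\<delta> n)^2" for n
    using power_mono[of "sqrt \<bar>E n\<bar>" "\<delta> n" 2] unfolding \<delta>_def by force
  have "\<delta> \<longlonglongrightarrow> sqrt \<bar>0\<bar> + 0"
    using assms(7) unfolding \<delta>_def[abs_def] E_def
    by (intro tendsto_add tendsto_real_sqrt tendsto_rabs LIMSEQ_inverse_real_of_nat)
  then have \<delta>_lim: "\<delta> \<longlonglongrightarrow> 0" by simp
  have "(\<lambda>n. sqrt (3 * \<delta> n)) \<longlonglongrightarrow> sqrt (3 * 0)"
    by (intro tendsto_real_sqrt tendsto_mult \<delta>_lim tendsto_const)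
  moreover have "(\<lambda>n. t n * \<delta> n) \<longlonglongrightarrow> 0 * 0"
    by (intro tendsto_mult assms(6) \<delta>_lim)
  then have "\<forall>\<^sub>F n in sequentially. t n * \<delta> n < 1"
    by (intro order_tendstoD(2)) auto
  then have "\<forall>\<^sub>F n in sequentially. \<forall>r. 0 \<le> r \<and> r \<le> t n \<longrightarrow>
      \<bar>u (t n) r\<bar> \<le> sqrt (3 * \<delta> n) * sqrt r"
  proof (rule eventually_mono)
    fix n assume "t n * \<delta> n < 1"
    then show "\<forall>r. 0 \<le> r \<and> r \<le> t n \<longrightarrow> \<bar>u (t n) r\<bar> \<le> sqrt (3 * \<delta> n) * sqrt r"
      using assms(4,5) \<delta>_pos energy[unfolded E_def]
      by (intro allI impI smooth_solution_slice_bound[OF assms(3)]) auto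
  qed
  ultimately show ?thesis by (intro exI[of _ "\<lambda>n. sqrt (3 * \<delta> n)"] conjI) simp_all
qed

end
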